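(* Let $m\ge2$ and let $T\in L(\ell_1^n,\ell_\infty^m)$, $T\neq\theta$, be approximately smooth (i.e. $\varepsilon$-smooth for some $\varepsilon\in[0,2)$). Then $T$ is smooth.
   Context: $\ell_1^n$ is $\mathbb{R}^n$ with the $\ell_1$ norm, $\ell_\infty^m$ is $\mathbb{R}^m$ with the max norm; $L(\ell_1^n,\ell_\infty^m)$ is the space of linear operators with the operator norm, and smoothness refers to $T$ as an element of this space. For a normed space $Z$ and $z\neq\theta$, $J(z)=\{\phi\in S_{Z^*}:\phi(z)=\|z\|\}$; $z$ is smooth if $J(z)$ is a singleton and $\varepsilon$-smooth if $\sup_{\phi,\psi\in J(z)}\|\phi-\psi\|\le\varepsilon$. *)

theory Defs
  imports "HOL-Analysis.Analysis"
begin

text \<open>Operators in L(l1^n, linf^m) are represented by their m x n matrices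
  (type real^'n^'m, acting by A *v x); this is a linear isomorphism.\<close>

definition l1norm :: "real^'n \<Rightarrow> real" where
  "l1norm x = (\<Sum>i\<in>UNIV. \<bar>x $ i\<bar>)"

definition linfnorm :: "real^'m \<Rightarrow> real" where
  "linfnorm y = Max (range (\<lambda>i. \<bar>y $ i\<bar>))"

definition opnorm_1inf :: "real^'n^'m \<Rightarrow> real" where
  "opnorm_1inf T = Sup {linfnorm (T *v x) | x. l1norm x \<le> 1}"

definition dualnorm :: "(real^'n^'m \<Rightarrow> real) \<Rightarrow> real" where
  "dualnorm \<phi> = Sup {\<bar>\<phi> S\<bar> | S. opnorm_1inf S \<le> 1}"

definition Jset :: "real^'n^'m \<Rightarrow> (real^'n^'m \<Rightarrow> real) set" where
  "Jset z = {\<phi>. linear \<phi> \<and> dualnorm \<phi> = 1 \<and> \<phi> z = opnorm_1inf z}"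

definition smooth_op :: "real^'n^'m \<Rightarrow> bool" where
  "smooth_op z \<longleftrightarrow> (\<exists>\<phi>. Jset z = {\<phi>})"

definition eps_smooth_op :: "real \<Rightarrow> real^'n^'m \<Rightarrow> bool" where
  "eps_smooth_op \<epsilon> z \<longleftrightarrow> (\<forall>\<phi>\<in>Jset z. \<forall>\<psi>\<in>Jset z. dualnorm (\<lambda>S. \<phi> S - \<psi> S) \<le> \<epsilon>)"

definition approx_smooth_op :: "real^'n^'m \<Rightarrow> bool" where
  "approx_smooth_op z \<longleftrightarrow> (\<exists>\<epsilon>. 0 \<le> \<epsilon> \<and> \<epsilon> < 2 \<and> eps_smooth_op \<epsilon> z)"

end

theory Submission
  imports Defs
begin

text \<open>The operator norm on L(l1^n, linf^m) is the largest modulus of a matrix entry, so the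
  space is linf^{mn} in the basis of matrix units and the dual norm of a functional is the sum
  of the moduli of its values on the matrix units. Every entry p of maximal modulus gives the
  support functional S \<mapsto> sgn(T_p) S_p of T, and two such functionals are at distance 2;
  hence approximate smoothness forces the maximal modulus to be attained at a single entry p.
  A support functional \<psi> then has coefficients of l1-norm 1 with \<Sum>q T_q \<psi>_q = |T_p|,
  which puts all of its weight on p, so J(T) is a singleton.\<close>

definition entry :: "real^'n^'m \<Rightarrow> 'm \<times> 'n \<Rightarrow> real" where
  "entry S p = S $ fst p $ snd p"

definition matrix_unit :: "'m \<times> 'n \<Rightarrow> real^'n^'m" where
  "matrix_unit p = (\<chi> i j. if (i, j) = p then 1 else 0)"

definition max_abs_entry :: "real^'n^'m \<Rightarrow> real" where
  "max_abs_entry S = Max (range (\<lambda>p. \<bar>entry S p\<bar>))"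

lemma entry_matrix_unit: "entry (matrix_unit p) q = (if q = p then 1 else 0)"
  by (simp add: entry_def matrix_unit_def)

lemma abs_entry_le_max_abs_entry: "\<bar>entry S p\<bar> \<le> max_abs_entry S"
  unfolding max_abs_entry_def by (rule Max_ge) auto

lemma max_abs_entry_le: "(\<And>p. \<bar>entry S p\<bar> \<le> c) \<Longrightarrow> max_abs_entry S \<le> c"
  unfolding max_abs_entry_def by (subst Max_le_iff) auto

lemma max_abs_entry_attained: "\<exists>p. max_abs_entry S = \<bar>entry S p\<bar>"
proof -
  have "max_abs_entry S \<in> range (\<lambda>p. \<bar>entry S p\<bar>)"
    unfolding max_abs_entry_def by (rule Max_in) auto
  then show ?thesis by auto
qed

lemma max_abs_entry_pos: "S \<noteq> 0 \<Longrightarrow> 0 < max_abs_entry S"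
proof -
  assume "S \<noteq> 0"
  then obtain i j where "S $ i $ j \<noteq> 0" by (auto simp: vec_eq_iff)
  then show ?thesis
    using abs_entry_le_max_abs_entry[of S "(i, j)"] by (simp add: entry_def)
qed

lemma linfnorm_le: "(\<And>i. \<bar>y $ i\<bar> \<le> c) \<Longrightarrow> linfnorm y \<le> c"
  unfolding linfnorm_def by (subst Max_le_iff) auto

lemma opnorm_1inf_eq_max_abs_entry: "opnorm_1inf S = max_abs_entry S"
proof -
  let ?M = "max_abs_entry S"
  obtain p where p: "?M = \<bar>entry S p\<bar>" using max_abs_entry_attained by blast
  have bound: "linfnorm (S *v x) \<le> ?M" if "l1norm x \<le> 1" for x
  proof (rule linfnorm_le)
    fix i
    have "\<bar>(S *v x) $ i\<bar> \<le> (\<Sum>j\<in>UNIV. \<bar>S $ i $ j\<bar> * \<bar>x $ j\<bar>)"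
      unfolding matrix_vector_mult_def vec_lambda_beta abs_mult[symmetric] by (rule sum_abs)
    also have "\<dots> \<le> (\<Sum>j\<in>UNIV. ?M * \<bar>x $ j\<bar>)"
      using abs_entry_le_max_abs_entry[of S "(i, _)"]
      by (intro sum_mono mult_right_mono) (auto simp: entry_def)
    also have "\<dots> = ?M * l1norm x" by (simp add: l1norm_def sum_distrib_left)
    also have "\<dots> \<le> ?M" using that p by (simp add: mult_left_le)
    finally show "\<bar>(S *v x) $ i\<bar> \<le> ?M" .
  qed
  define x where "x = axis (snd p) (1::real)"
  have "l1norm x = 1"
    by (simp add: l1norm_def x_def axis_def)
  moreover have "(S *v x) $ fst p = entry S p"
    by (simp add: x_def matrix_vector_mult_def axis_def entry_def if_distrib[of "\<lambda>x. _ * x"]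
        cong: if_cong)
  then have "?M \<le> linfnorm (S *v x)"
    unfolding p linfnorm_def by (intro Max_ge) (auto intro: range_eqI[of _ _ "fst p"])
  ultimately have "?M \<in> {linfnorm (S *v x) | x. l1norm x \<le> 1}"
    using bound by (intro CollectI exI[of _ x]) (auto intro: antisym)
  then show ?thesis
    unfolding opnorm_1inf_def by (rule cSup_eq_maximum) (use bound in auto)
qed

lemma matrix_eq_sum_matrix_units: "S = (\<Sum>p\<in>UNIV. entry S p *\<^sub>R matrix_unit p)"
proof -
  have "(\<Sum>p\<in>UNIV. entry S p *\<^sub>R matrix_unit p) $ i $ j = S $ i $ j" for i j
  proof -
    have "(\<Sum>p\<in>UNIV. entry S p *\<^sub>R matrix_unit p) $ i $ j
        = (\<Sum>p\<in>UNIV. if p = (i, j) then entry S p else 0)"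
      unfolding sum_component vector_scaleR_component
      by (rule sum.cong) (auto simp: matrix_unit_def)
    then show ?thesis by (simp add: entry_def)
  qed
  then show ?thesis by (simp add: vec_eq_iff)
qed

lemma linear_eq_sum_entries:
  assumes "linear \<phi>"
  shows "\<phi> S = (\<Sum>p\<in>UNIV. entry S p * \<phi> (matrix_unit p))"
  using assms by (subst matrix_eq_sum_matrix_units) (simp add: linear_sum linear_scale)

lemma dualnorm_eq_sum_abs:
  assumes "linear \<phi>"
  shows "dualnorm \<phi> = (\<Sum>p\<in>UNIV. \<bar>\<phi> (matrix_unit p)\<bar>)"
proof -
  let ?c = "\<lambda>p. \<phi> (matrix_unit p)"
  have bound: "\<bar>\<phi> S\<bar> \<le> (\<Sum>p\<in>UNIV. \<bar>?c p\<bar>)" if "opnorm_1inf S \<le> 1" for S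
  proof -
    have "\<bar>\<phi> S\<bar> \<le> (\<Sum>p\<in>UNIV. \<bar>entry S p\<bar> * \<bar>?c p\<bar>)"
      unfolding linear_eq_sum_entries[OF assms, of S] abs_mult[symmetric] by (rule sum_abs)
    also have "\<dots> \<le> (\<Sum>p\<in>UNIV. \<bar>?c p\<bar>)"
      using that abs_entry_le_max_abs_entry[of S]
      by (intro sum_mono mult_left_le_one_le)
        (auto simp: opnorm_1inf_eq_max_abs_entry intro: order_trans)
    finally show ?thesis .
  qed
  define signs where "signs = (\<chi> i j. sgn (?c (i, j)))"
  have "opnorm_1inf signs \<le> 1"
    unfolding opnorm_1inf_eq_max_abs_entry
    by (rule max_abs_entry_le) (simp add: signs_def entry_def sgn_if)
  moreover have "\<phi> signs = (\<Sum>p\<in>UNIV. \<bar>?c p\<bar>)"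
    unfolding linear_eq_sum_entries[OF assms, of signs]
    by (rule sum.cong) (auto simp: signs_def entry_def sgn_if)
  ultimately have "(\<Sum>p\<in>UNIV. \<bar>?c p\<bar>) \<in> {\<bar>\<phi> S\<bar> | S. opnorm_1inf S \<le> 1}"
    by (metis (mono_tags, lifting) abs_of_nonneg mem_Collect_eq sum_nonneg abs_ge_zero)
  then show ?thesis
    unfolding dualnorm_def by (rule cSup_eq_maximum) (use bound in auto)
qed

definition entry_functional :: "'m \<times> 'n \<Rightarrow> real \<Rightarrow> real^'n^'m \<Rightarrow> real" where
  "entry_functional p c S = c * entry S p"

lemma linear_entry_functional: "linear (entry_functional p c)"
  by (rule linearI) (simp_all add: entry_functional_def entry_def algebra_simps)

lemma entry_functional_matrix_unit:
  "entry_functional p c (matrix_unit q) = (if q = p then c else 0)"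
  by (simp add: entry_functional_def entry_matrix_unit)

lemma dualnorm_entry_functional: "dualnorm (entry_functional p c) = \<bar>c\<bar>"
  by (simp add: dualnorm_eq_sum_abs linear_entry_functional entry_functional_matrix_unit
      if_distrib[of abs] cong: if_cong)

lemma entry_functional_in_Jset:
  assumes "opnorm_1inf T = \<bar>entry T p\<bar>" and "entry T p \<noteq> 0"
  shows "entry_functional p (sgn (entry T p)) \<in> Jset T"
  using assms by (simp add: Jset_def linear_entry_functional dualnorm_entry_functional abs_sgn
      entry_functional_def sgn_mult_abs mult.commute)

lemma dualnorm_diff_entry_functionals:
  assumes "p \<noteq> q"
  shows "dualnorm (\<lambda>S. entry_functional p a S - entry_functional q b S) = \<bar>a\<bar> + \<bar>b\<bar>"
proof -
  have lin: "linear (\<lambda>S. entry_functional p a S - entry_functional q b S)"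
    using linear_entry_functional by (rule linear_compose_sub) (rule linear_entry_functional)
  have "dualnorm (\<lambda>S. entry_functional p a S - entry_functional q b S)
      = (\<Sum>r\<in>UNIV. (if r = p then \<bar>a\<bar> else 0) + (if r = q then \<bar>b\<bar> else 0))"
    unfolding dualnorm_eq_sum_abs[OF lin]
    by (intro sum.cong) (auto simp: entry_functional_matrix_unit assms)
  then show ?thesis by (simp add: sum.distrib)
qed

lemma eps_smooth_max_abs_entry_unique:
  assumes "eps_smooth_op \<epsilon> T" and "\<epsilon> < 2" and "0 < opnorm_1inf T"
    and "opnorm_1inf T = \<bar>entry T p\<bar>" and "opnorm_1inf T = \<bar>entry T q\<bar>"
  shows "p = q"
proof (rule ccontr)
  assume "p \<noteq> q"
  have "entry_functional p (sgn (entry T p)) \<in> Jset T"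
    "entry_functional q (sgn (entry T q)) \<in> Jset T"
    using assms(3-5) by (auto intro!: entry_functional_in_Jset)
  then have "dualnorm (\<lambda>S. entry_functional p (sgn (entry T p)) S
      - entry_functional q (sgn (entry T q)) S) \<le> \<epsilon>"
    using assms(1) unfolding eps_smooth_op_def by blast
  moreover have "entry T p \<noteq> 0" "entry T q \<noteq> 0" using assms(3-5) by auto
  ultimately show False
    using assms(2) by (simp add: dualnorm_diff_entry_functionals[OF \<open>p \<noteq> q\<close>] abs_sgn)
qed

lemma Jset_unique_max_abs_entry:
  assumes max: "\<And>q. q \<noteq> p \<Longrightarrow> \<bar>entry T q\<bar> < \<bar>entry T p\<bar>" and "entry T p \<noteq> 0"
    and "\<psi> \<in> Jset T"
  shows "\<psi> = entry_functional p (sgn (entry T p))"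
proof -
  let ?M = "\<bar>entry T p\<bar>" and ?c = "\<lambda>q. \<psi> (matrix_unit q)"
  let ?slack = "\<lambda>q. ?M * \<bar>?c q\<bar> - entry T q * ?c q"
  have lin: "linear \<psi>" and norm: "(\<Sum>q\<in>UNIV. \<bar>?c q\<bar>) = 1"
    and norming: "\<psi> T = opnorm_1inf T"
    using assms(3) by (auto simp: Jset_def dualnorm_eq_sum_abs)
  have "opnorm_1inf T = ?M"
    using max_abs_entry_attained[of T] abs_entry_le_max_abs_entry[of T] max
    by (metis opnorm_1inf_eq_max_abs_entry not_less)
  moreover have "\<psi> T = (\<Sum>q\<in>UNIV. entry T q * ?c q)"
    by (rule linear_eq_sum_entries[OF lin])
  ultimately have "(\<Sum>q\<in>UNIV. ?slack q) = ?M * (\<Sum>q\<in>UNIV. \<bar>?c q\<bar>) - \<psi> T"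
    using norming by (simp only: sum_subtractf sum_distrib_left)
  also have "\<dots> = 0" using norm norming \<open>opnorm_1inf T = ?M\<close> by simp
  finally have "(\<Sum>q\<in>UNIV. ?slack q) = 0" .
  moreover have slack_nonneg: "0 \<le> ?slack q" for q
  proof -
    have "entry T q * ?c q \<le> \<bar>entry T q\<bar> * \<bar>?c q\<bar>"
      by (simp only: abs_mult[symmetric] abs_ge_self)
    also have "\<dots> \<le> ?M * \<bar>?c q\<bar>"
      using max[of q] by (cases "q = p") (auto intro: mult_right_mono)
    finally show ?thesis by simp
  qed
  ultimately have slack_zero: "?slack q = 0" for q
    using sum_nonneg_eq_0_iff[OF finite, of UNIV ?slack] by blast
  have off_diagonal: "?c q = 0" if "q \<noteq> p" for q
  proof (rule ccontr)
    assume "?c q \<noteq> 0"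
    then have "\<bar>entry T q * ?c q\<bar> < ?M * \<bar>?c q\<bar>"
      using max[OF that] by (simp add: abs_mult)
    then show False using slack_zero[of q] by simp
  qed
  then have \<psi>_eq: "\<psi> S = entry S p * ?c p" for S
    unfolding linear_eq_sum_entries[OF lin, of S]
    by (subst sum.mono_neutral_right[of UNIV "{p}"]) auto
  have "\<bar>?c p\<bar> = 1"
    using norm off_diagonal by (subst (asm) sum.mono_neutral_right[of UNIV "{p}"]) auto
  moreover have "entry T p * sgn (entry T p) = \<bar>entry T p\<bar>" by (simp add: sgn_if)
  ultimately have "entry T p * ?c p = entry T p * sgn (entry T p)"
    using slack_zero[of p] by (simp only: mult_1_right)
  then have "?c p = sgn (entry T p)" using assms(2) by simp
  then have "\<psi> S = entry_functional p (sgn (entry T p)) S" for S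
    using \<psi>_eq[of S] by (simp add: entry_functional_def mult.commute)
  then show ?thesis by blast
qed

theorem theorem3p5:
  fixes T :: "real^'n^'m"
  assumes "CARD('m) \<ge> 2"
    and "T \<noteq> 0"
    and "approx_smooth_op T"
  shows "smooth_op T"
proof -
  obtain \<epsilon> where eps: "eps_smooth_op \<epsilon> T" "\<epsilon> < 2"
    using assms(3) by (auto simp: approx_smooth_op_def)
  obtain p where p: "opnorm_1inf T = \<bar>entry T p\<bar>"
    using max_abs_entry_attained opnorm_1inf_eq_max_abs_entry by metis
  have pos: "0 < opnorm_1inf T"
    using assms(2) by (simp add: opnorm_1inf_eq_max_abs_entry max_abs_entry_pos)
  have strict_max: "\<bar>entry T q\<bar> < \<bar>entry T p\<bar>" if "q \<noteq> p" for q
  proof -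
    have "\<bar>entry T q\<bar> \<le> opnorm_1inf T"
      by (simp add: opnorm_1inf_eq_max_abs_entry abs_entry_le_max_abs_entry)
    moreover have "opnorm_1inf T \<noteq> \<bar>entry T q\<bar>"
      using eps_smooth_max_abs_entry_unique[OF eps pos p] that by blast
    ultimately show ?thesis using p by linarith
  qed
  have "entry T p \<noteq> 0" using pos p by auto
  then have "Jset T = {entry_functional p (sgn (entry T p))}"
    using strict_max entry_functional_in_Jset[OF p] Jset_unique_max_abs_entry by blast
  then show ?thesis unfolding smooth_op_def by blast
qed

end
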